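(* Let $C=(X,\xi)$ be a finite $T$-coalgebra. For every $x\in X$ there exists a closed and guarded expression $\phi\in\mathcal{E}_0$ such that $x\in[\![\phi]\!]_C$.
   Context: Standing assumptions: $T:\mathbf{Set}\to\mathbf{Set}$ is a functor; $\mathcal{L}$ is a set of modalities with arities ($L/n$), each $L/n$ assigned an $n$-ary monotone singleton-preserving predicate lifting $[\![L]\!]$ for $T$ such that $\Lambda=\{[\![L]\!]\mid L\in\mathcal{L}\}$ is strongly expressive. (An $n$-ary predicate lifting is a family $\lambda_X:(\mathcal{P}X)^n\to\mathcal{P}(TX)$ with $\lambda_X(f^{-1}[A_1],\dots,f^{-1}[A_n])=(Tf)^{-1}[\lambda_Y(A_1,\dots,A_n)]$ for $f:X\to Y$; monotone if monotone in each argument; singleton-preserving if $|\lambda_X(\{x_1\},\dots,\{x_n\})|=1$ for all $x_i\in X$; $\Lambda$ strongly expressive if for every set $X$ and $t\in TX$ there are $\lambda/n\in\Lambda$, $x_i\in X$ with $\{t\}=\lambda_X(\{x_1\},\dots,\{x_n\})$.) Fix a set $V$ of variables. Expressions $\mathcal{E}$: $\phi::=z\mid\nu z.\,\phi\mid L(\phi_1,\dots,\phi_n)$. Closed: every variable occurrence bound by a $\nu$. Guarded: every variable occurrence is separated from its binding $\nu$ by at least one modality. $\mathcal{E}_0$ is the set of closed guarded expressions. Semantics in a coalgebra $C=(X,\xi)$ under valuation $\kappa:V\to\mathcal{P}X$: $[\![z]\!]^\kappa=\kappa(z)$; $[\![L(\phi_1,\dots,\phi_n)]\!]^\kappa=\xi^{-1}[[\![L]\!]_X([\![\phi_1]\!]^\kappa,\dots,[\![\phi_n]\!]^\kappa)]$;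 $[\![\nu z.\phi]\!]^\kappa=$ greatest fixed point of $Y\mapsto[\![\phi]\!]^{\kappa[z\mapsto Y]}$; for closed $\phi$ write $[\![\phi]\!]_C$. *)

theory Defs
  imports Main
begin

text \<open>
  Set functors are represented relative to a universe type 'u: objects are subsets
  X of 'u, the functor sends X to a set T X of elements of a type 't, and for a map
  f from X to Y (a HOL function f with f ` X within Y) the action is Tm X Y f.
\<close>

definition set_functor ::
  "('u set \<Rightarrow> 't set) \<Rightarrow> ('u set \<Rightarrow> 'u set \<Rightarrow> ('u \<Rightarrow> 'u) \<Rightarrow> 't \<Rightarrow> 't) \<Rightarrow> bool" where
  "set_functor T Tm \<longleftrightarrow>
     (\<forall>X Y f t. f ` X \<subseteq> Y \<and> t \<in> T X \<longrightarrow> Tm X Y f t \<in> T Y) \<and>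
     (\<forall>X Y f g t. (\<forall>x\<in>X. f x = g x) \<and> t \<in> T X \<longrightarrow> Tm X Y f t = Tm X Y g t) \<and>
     (\<forall>X t. t \<in> T X \<longrightarrow> Tm X X id t = t) \<and>
     (\<forall>X Y Z f g t. f ` X \<subseteq> Y \<and> g ` Y \<subseteq> Z \<and> t \<in> T X \<longrightarrow>
        Tm X Z (g \<circ> f) t = Tm Y Z g (Tm X Y f t))"

definition pred_lifting ::
  "('u set \<Rightarrow> 't set) \<Rightarrow> ('u set \<Rightarrow> 'u set \<Rightarrow> ('u \<Rightarrow> 'u) \<Rightarrow> 't \<Rightarrow> 't) \<Rightarrow> nat
    \<Rightarrow> ('u set \<Rightarrow> 'u set list \<Rightarrow> 't set) \<Rightarrow> bool" where
  "pred_lifting T Tm n lam \<longleftrightarrow>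
     (\<forall>X As. length As = n \<and> (\<forall>A\<in>set As. A \<subseteq> X) \<longrightarrow> lam X As \<subseteq> T X) \<and>
     (\<forall>X Y f As. f ` X \<subseteq> Y \<and> length As = n \<and> (\<forall>A\<in>set As. A \<subseteq> Y) \<longrightarrow>
        lam X (map (\<lambda>A. X \<inter> f -` A) As) = {t \<in> T X. Tm X Y f t \<in> lam Y As})"

definition monotone_lifting :: "nat \<Rightarrow> ('u set \<Rightarrow> 'u set list \<Rightarrow> 't set) \<Rightarrow> bool" where
  "monotone_lifting n lam \<longleftrightarrow>
     (\<forall>X As Bs. length As = n \<and> length Bs = n \<and> (\<forall>B\<in>set Bs. B \<subseteq> X) \<and>
        (\<forall>i<n. As ! i \<subseteq> Bs ! i) \<longrightarrow> lam X As \<subseteq> lam X Bs)"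

definition singleton_preserving :: "nat \<Rightarrow> ('u set \<Rightarrow> 'u set list \<Rightarrow> 't set) \<Rightarrow> bool" where
  "singleton_preserving n lam \<longleftrightarrow>
     (\<forall>X xs. length xs = n \<and> set xs \<subseteq> X \<longrightarrow> card (lam X (map (\<lambda>x. {x}) xs)) = 1)"

definition strongly_expressive ::
  "('u set \<Rightarrow> 't set) \<Rightarrow> ('l \<Rightarrow> nat) \<Rightarrow> ('l \<Rightarrow> 'u set \<Rightarrow> 'u set list \<Rightarrow> 't set) \<Rightarrow> bool" where
  "strongly_expressive T ar lift \<longleftrightarrow>
     (\<forall>X t. t \<in> T X \<longrightarrow>
        (\<exists>L xs. length xs = ar L \<and> set xs \<subseteq> X \<and> {t} = lift L X (map (\<lambda>x. {x}) xs)))"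

datatype ('l, 'v) expr = Var 'v | Nu 'v "('l, 'v) expr" | Mod 'l "('l, 'v) expr list"

fun fv :: "('l, 'v) expr \<Rightarrow> 'v set" where
  "fv (Var z) = {z}"
| "fv (Nu z e) = fv e - {z}"
| "fv (Mod L es) = (\<Union>e\<in>set es. fv e)"

fun unguarded_fv :: "('l, 'v) expr \<Rightarrow> 'v set" where
  "unguarded_fv (Var z) = {z}"
| "unguarded_fv (Nu z e) = unguarded_fv e - {z}"
| "unguarded_fv (Mod L es) = {}"

fun guarded :: "('l, 'v) expr \<Rightarrow> bool" where
  "guarded (Var z) = True"
| "guarded (Nu z e) = (z \<notin> unguarded_fv e \<and> guarded e)"
| "guarded (Mod L es) = (\<forall>e\<in>set es. guarded e)"

fun well_arity :: "('l \<Rightarrow> nat) \<Rightarrow> ('l, 'v) expr \<Rightarrow> bool" where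
  "well_arity ar (Var z) = True"
| "well_arity ar (Nu z e) = well_arity ar e"
| "well_arity ar (Mod L es) = (length es = ar L \<and> (\<forall>e\<in>set es. well_arity ar e))"

definition closed :: "('l, 'v) expr \<Rightarrow> bool" where
  "closed e \<longleftrightarrow> fv e = {}"

fun sem :: "('l \<Rightarrow> 'u set \<Rightarrow> 'u set list \<Rightarrow> 't set) \<Rightarrow> 'u set \<Rightarrow> ('u \<Rightarrow> 't)
             \<Rightarrow> ('v \<Rightarrow> 'u set) \<Rightarrow> ('l, 'v) expr \<Rightarrow> 'u set" where
  "sem lift X xi \<kappa> (Var z) = \<kappa> z"
| "sem lift X xi \<kappa> (Mod L es) = {x \<in> X. xi x \<in> lift L X (map (sem lift X xi \<kappa>) es)}"
| "sem lift X xi \<kappa> (Nu z e) = gfp (\<lambda>Y. X \<inter> sem lift X xi (\<kappa>(z := X \<inter> Y)) e)"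

end

theory Submission
  imports Defs
begin

text \<open>Strong expressiveness presents each successor structure \<open>xi y\<close> as the unique element of
  \<open>[L](x\<^sub>1, \<dots>, x\<^sub>n)\<close> for a modality \<open>L\<close> and states \<open>x\<^sub>i\<close>. Unfolding these presentations from
  \<open>x\<close>, binding a fresh variable to every state at its first visit and using that variable on
  revisits, yields a closed guarded expression; finiteness makes the unfolding stop. Since
  the liftings are monotone, the singleton of every bound state is a post-fixpoint of its
  \<open>\<nu>\<close>-binder, so by coinduction each state satisfies its own unfolding.\<close>

definition modal_presentation ::
  "('l \<Rightarrow> nat) \<Rightarrow> ('l \<Rightarrow> 'u set \<Rightarrow> 'u set list \<Rightarrow> 't set) \<Rightarrow> 'u set \<Rightarrow> ('u \<Rightarrow> 't)
    \<Rightarrow> ('u \<Rightarrow> 'l \<times> 'u list) \<Rightarrow> bool" where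
  "modal_presentation ar lift X xi step \<longleftrightarrow>
     (\<forall>y\<in>X. length (snd (step y)) = ar (fst (step y)) \<and> set (snd (step y)) \<subseteq> X \<and>
        {xi y} = lift (fst (step y)) X (map (\<lambda>x. {x}) (snd (step y))))"

lemma strongly_expressive_modal_presentation:
  assumes "strongly_expressive T ar lift" and "\<forall>y\<in>X. xi y \<in> T X"
  obtains step where "modal_presentation ar lift X xi step"
proof -
  have "\<forall>y\<in>X. \<exists>p. length (snd p) = ar (fst p) \<and> set (snd p) \<subseteq> X \<and>
      {xi y} = lift (fst p) X (map (\<lambda>x. {x}) (snd p))"
    using assms unfolding strongly_expressive_def by fastforce
  then show thesis
    using that unfolding modal_presentation_def by metis
qed

lemma finite_inj_on_into_infinite:
  assumes "finite X" and "infinite (UNIV :: 'v set)"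
  obtains z :: "'u \<Rightarrow> 'v" where "inj_on z X"
proof -
  obtain g :: "nat \<Rightarrow> 'v" where "inj g"
    using infinite_countable_subset[OF assms(2)] by blast
  moreover obtain h :: "'u \<Rightarrow> nat" where "inj_on h X"
    using finite_imp_inj_to_nat_seg[OF assms(1)] by blast
  ultimately have "inj_on (g \<circ> h) X"
    by (simp add: comp_inj_on inj_on_subset)
  then show thesis by (rule that)
qed

text \<open>The state \<open>y\<close> is unfolded with \<open>S\<close> the states already bound on the path to it and
  \<open>z\<close> naming their variables. The guards \<open>\<not> finite X\<close> and \<open>y \<notin> X\<close> only serve termination.\<close>

function unfold_expr ::
  "'u set \<Rightarrow> ('u \<Rightarrow> 'v) \<Rightarrow> ('u \<Rightarrow> 'l \<times> 'u list) \<Rightarrow> 'u set \<Rightarrow> 'u \<Rightarrow> ('l, 'v) expr" where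
  "unfold_expr X z step S y =
     (if y \<in> S \<or> \<not> finite X \<or> y \<notin> X then Var (z y)
      else Nu (z y) (Mod (fst (step y)) (map (unfold_expr X z step (insert y S)) (snd (step y)))))"
  by pat_completeness auto
termination
proof (relation "measure (\<lambda>(X, _, _, S, _). card (X - S))")
  fix X S y and z :: "'u \<Rightarrow> 'v" and step :: "'u \<Rightarrow> 'l \<times> 'u list" and x
  assume "\<not> (y \<in> S \<or> \<not> finite X \<or> y \<notin> X)"
  then have "X - insert y S \<subset> X - S" and "finite (X - S)" by auto
  then show "((X, z, step, insert y S, x), X, z, step, S, y)
      \<in> measure (\<lambda>(X, _, _, S, _). card (X - S))"
    by (simp add: psubset_card_mono)
qed simp

declare unfold_expr.simps [simp del]

lemma fv_unfold_expr:
  assumes "finite X" and "\<forall>y\<in>X. set (snd (step y)) \<subseteq> X" and "y \<in> X"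
  shows "fv (unfold_expr X z step S y) \<subseteq> z ` S"
  using assms
proof (induction X z step S y rule: unfold_expr.induct)
  case (1 X z step S y)
  show ?case
  proof (cases "y \<in> S")
    case False
    have "fv e \<subseteq> z ` insert y S"
      if "e \<in> set (map (unfold_expr X z step (insert y S)) (snd (step y)))" for e
      using that "1.IH" False "1.prems" by auto
    then show ?thesis
      using False "1.prems"(1,3) by (force simp: unfold_expr.simps[of X z step S y])
  qed (simp add: unfold_expr.simps[of X z step S y])
qed

lemma guarded_unfold_expr: "guarded (unfold_expr X z step S y)"
proof (induction X z step S y rule: unfold_expr.induct)
  case (1 X z step S y)
  then show ?case
    by (simp add: unfold_expr.simps[of X z step S y])
qed

lemma well_arity_unfold_expr:
  assumes "modal_presentation ar lift X xi step" and "y \<in> X"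
  shows "well_arity ar (unfold_expr X z step S y)"
  using assms
proof (induction X z step S y rule: unfold_expr.induct)
  case (1 X z step S y)
  then show ?case
    unfolding modal_presentation_def
    by (auto simp: unfold_expr.simps[of X z step S y])
qed

lemma sem_subset:
  assumes "\<forall>v. \<kappa> v \<subseteq> X"
  shows "sem lift X xi \<kappa> e \<subseteq> X"
proof (cases e)
  case (Nu z e')
  have "gfp (\<lambda>Y. X \<inter> sem lift X xi (\<kappa>(z := X \<inter> Y)) e') \<subseteq> X"
    unfolding gfp_def by (rule Sup_least) auto
  then show ?thesis using Nu by simp
qed (use assms in auto)

lemma valuation_bind_state:
  assumes "inj_on z X" and "y \<in> X" and "S \<subseteq> X" and "\<forall>s\<in>S. s \<in> \<kappa> (z s)"
  shows "\<forall>s\<in>insert y S. s \<in> (\<kappa>(z y := X \<inter> {y})) (z s)"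
  using assms unfolding inj_on_def by auto

lemma mem_sem_unfold_expr:
  assumes "finite X" and "inj_on z X"
    and "modal_presentation ar lift X xi step"
    and "\<And>L. monotone_lifting (ar L) (lift L)"
    and "y \<in> X" and "S \<subseteq> X"
    and "\<forall>v. \<kappa> v \<subseteq> X" and "\<forall>s\<in>S. s \<in> \<kappa> (z s)"
  shows "y \<in> sem lift X xi \<kappa> (unfold_expr X z step S y)"
  using assms
proof (induction X z step S y arbitrary: \<kappa> rule: unfold_expr.induct)
  case (1 X z step S y)
  show ?case
  proof (cases "y \<in> S")
    case True
    then show ?thesis
      using "1.prems"(8) by (simp add: unfold_expr.simps[of X z step S y])
  next
    case False
    obtain L xs where step_y: "step y = (L, xs)" by fastforce
    have len: "length xs = ar L" and xs_X: "set xs \<subseteq> X"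
      and singleton: "{xi y} = lift L X (map (\<lambda>x. {x}) xs)"
      using "1.prems"(3,5) step_y unfolding modal_presentation_def by force+
    define \<kappa>' where "\<kappa>' = \<kappa>(z y := X \<inter> {y})"
    have \<kappa>'_X: "\<forall>v. \<kappa>' v \<subseteq> X"
      using "1.prems"(7) unfolding \<kappa>'_def by auto
    have \<kappa>'_bound: "\<forall>s\<in>insert y S. s \<in> \<kappa>' (z s)"
      using valuation_bind_state[OF "1.prems"(2,5,6,8)] unfolding \<kappa>'_def .
    let ?Bs = "map (sem lift X xi \<kappa>' \<circ> unfold_expr X z step (insert y S)) xs"
    have "\<forall>i<ar L. map (\<lambda>x. {x}) xs ! i \<subseteq> ?Bs ! i"
    proof (intro allI impI)
      fix i assume "i < ar L"
      then have "xs ! i \<in> set xs" using len by simp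
      then have "xs ! i \<in> sem lift X xi \<kappa>' (unfold_expr X z step (insert y S) (xs ! i))"
        using "1.IH"[OF _ _ "1.prems"(1-4) _ _ \<kappa>'_X \<kappa>'_bound] False "1.prems"(1,5,6)
          xs_X step_y by auto
      then show "map (\<lambda>x. {x}) xs ! i \<subseteq> ?Bs ! i"
        using len \<open>i < ar L\<close> by simp
    qed
    moreover have "\<forall>B\<in>set ?Bs. B \<subseteq> X"
      using sem_subset[OF \<kappa>'_X] by auto
    ultimately have "lift L X (map (\<lambda>x. {x}) xs) \<subseteq> lift L X ?Bs"
      using "1.prems"(4)[of L] len unfolding monotone_lifting_def by simp
    then have "xi y \<in> lift L X ?Bs"
      using singleton by blast
    then have "{y} \<subseteq> X \<inter> sem lift X xi (\<kappa>(z y := X \<inter> {y}))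
                        (Mod L (map (unfold_expr X z step (insert y S)) xs))"
      using "1.prems"(5) by (simp add: \<kappa>'_def comp_def)
    then have "{y} \<subseteq> gfp (\<lambda>Y. X \<inter> sem lift X xi (\<kappa>(z y := X \<inter> Y))
                        (Mod L (map (unfold_expr X z step (insert y S)) xs)))"
      by (rule gfp_upperbound)
    then show ?thesis
      using False "1.prems"(1,5) step_y by (simp add: unfold_expr.simps[of X z step S y])
  qed
qed

theorem mainTheorem12:
  fixes T :: "'u set \<Rightarrow> 't set"
    and Tm :: "'u set \<Rightarrow> 'u set \<Rightarrow> ('u \<Rightarrow> 'u) \<Rightarrow> 't \<Rightarrow> 't"
    and ar :: "'l \<Rightarrow> nat"
    and lift :: "'l \<Rightarrow> 'u set \<Rightarrow> 'u set list \<Rightarrow> 't set"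
    and X :: "'u set"
    and xi :: "'u \<Rightarrow> 't"
    and x :: 'u
  assumes "set_functor T Tm"
    and "\<And>L. pred_lifting T Tm (ar L) (lift L)"
    and "\<And>L. monotone_lifting (ar L) (lift L)"
    and "\<And>L. singleton_preserving (ar L) (lift L)"
    and "strongly_expressive T ar lift"
    and "infinite (UNIV :: 'v set)"
    and "finite X"
    and "\<forall>y\<in>X. xi y \<in> T X"
    and "x \<in> X"
  shows "\<exists>\<phi> :: ('l, 'v) expr. well_arity ar \<phi> \<and> closed \<phi> \<and> guarded \<phi> \<and>
           x \<in> sem lift X xi (\<lambda>_. {}) \<phi>"
proof -
  obtain step where step: "modal_presentation ar lift X xi step"
    using strongly_expressive_modal_presentation[OF assms(5,8)] .
  obtain z :: "'u \<Rightarrow> 'v" where z: "inj_on z X"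
    using finite_inj_on_into_infinite[OF assms(7,6)] .
  let ?\<phi> = "unfold_expr X z step {} x"
  have "well_arity ar ?\<phi>"
    using well_arity_unfold_expr[OF step assms(9)] .
  moreover have "closed ?\<phi>"
    using fv_unfold_expr[OF assms(7) _ assms(9), of step z "{}"] step
    unfolding closed_def modal_presentation_def by simp
  moreover have "guarded ?\<phi>"
    by (rule guarded_unfold_expr)
  moreover have "x \<in> sem lift X xi (\<lambda>_. {}) ?\<phi>"
    by (rule mem_sem_unfold_expr[OF assms(7) z step assms(3) assms(9)]) simp_all
  ultimately show ?thesis
    by blast
qed

end
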